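(* Let $A \in \mathbb{C}^{m \times p}$, $y \in \mathbb{C}^{m}$, patch-extraction operators $P_1,\dots,P_N \in \{0,1\}^{n \times p}$, an integer $K\ge1$, and $\nu,\eta,C>0$. Define $$h(W,B,\Gamma,x) = \nu\|Ax-y\|_2^2 + \chi(x) + \sum_{k=1}^K \varphi(W_k) + \sum_{j=1}^N\left\{\|W_{\Gamma_j}P_jx - b_j\|_2^2 + \eta^2\|b_j\|_0\right\},$$ with $W\in\mathbb{C}^{Kn\times n}$ the stack of $W_1,\dots,W_K\in\mathbb{C}^{n\times n}$, $B=[b_1|\cdots|b_N]$, $\Gamma\in\{1,\dots,K\}^{1\times N}$, $\varphi(W_k)=0$ if $W_k^HW_k=I$ and $+\infty$ otherwise, $\chi(x)=0$ if $\|x\|_2\le C$ and $+\infty$ otherwise. For each initialization $(W^0,B^0,\Gamma^0,x^0)$, the iterate sequence of Algorithm A2 (described in the context) converges to an equivalence class (all members achieving the same objective value) of accumulation points $(W,B,\Gamma,x)$ that are partial minimizers satisfying: $x\in\arg\min_{\tilde x}h(W,B,\Gamma,\tilde x)$, $W\in\arg\min_{\tilde W}h(\tilde W,B,\Gamma,x)$, $(B,\Gamma)\in\arg\min_{\tilde B,\tilde\Gamma}h(W,\tilde B,\tilde\Gamma,x)$, and $h(W,B+\Delta B,\Gamma,x+\Delta x)\ge h(W,B,\Gamma,x)$ for all $\Delta x\in\mathbb{C}^p$ and all $\Delta B$ with $\|\Delta B\|_\infty<\eta/2$.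
   Context: $\|b\|_0$ counts nonzeros; $\|H\|_\infty=\max_{i,j}|H_{ij}|$. $H_\eta$ is entrywise hard thresholding: $(H_\eta(\alpha))_i=0$ if $|\alpha_i|<\eta$, $=\alpha_i$ if $|\alpha_i|\ge\eta$. Algorithm A2: for $t=1,2,\dots$, with exact computations: (1) for each $k$, with $Q_k,R_k$ the matrices with columns $P_jx^{t-1}$, $b_j^{t-1}$ for $j$ with $\Gamma_j^{t-1}=k$, and full SVD $Q_kR_k^H=U\Sigma V^H$, set $W_k^t=VU^H$; (2) for each $j$, with $\gamma_k=\|W_k^tP_jx^{t-1}-H_\eta(W_k^tP_jx^{t-1})\|_2^2+\eta^2\|H_\eta(W_k^tP_jx^{t-1})\|_0$, set $\Gamma_j^t$ the smallest minimizing $k$ and $b_j^t=H_\eta(W^t_{\Gamma_j^t}P_jx^{t-1})$; (3) $x^t$ is a global minimizer of $\nu\|Ax-y\|_2^2+\sum_j\|W^t_{\Gamma^t_j}P_jx-b_j^t\|_2^2$ subject to $\|x\|_2\le C$. *)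

theory Defs
  imports "HOL-Analysis.Analysis"
begin

definition cadj :: "complex^'a^'b \<Rightarrow> complex^'b^'a" where
  "cadj M = (\<chi> i j. cnj (M $ j $ i))"

definition unitary_mat :: "complex^'n^'n \<Rightarrow> bool" where
  "unitary_mat W \<longleftrightarrow> cadj W ** W = mat 1"

definition outer :: "complex^'a \<Rightarrow> complex^'b \<Rightarrow> complex^'b^'a" where
  "outer u v = (\<chi> i j. u $ i * cnj (v $ j))"

definition is_full_svd :: "complex^'n^'n \<Rightarrow> complex^'n^'n \<Rightarrow> complex^'n^'n \<Rightarrow> complex^'n^'n \<Rightarrow> bool" where
  "is_full_svd M U S V \<longleftrightarrow> unitary_mat U \<and> unitary_mat V
     \<and> (\<forall>i j. i \<noteq> j \<longrightarrow> S $ i $ j = 0)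
     \<and> (\<forall>i. S $ i $ i \<in> \<real> \<and> 0 \<le> Re (S $ i $ i))
     \<and> M = U ** S ** cadj V"

definition l0 :: "complex^'n \<Rightarrow> nat" where
  "l0 b = card {i. b $ i \<noteq> 0}"

definition hard_thr :: "real \<Rightarrow> complex^'n \<Rightarrow> complex^'n" where
  "hard_thr \<eta> a = (\<chi> i. if norm (a $ i) < \<eta> then 0 else a $ i)"

text \<open>Transforms indexed by a finite linear order type 'k (playing {1..K}),
  patches by a finite type 'j (playing {1..N}).\<close>
definition hobj ::
  "complex^'p^'m \<Rightarrow> complex^'m \<Rightarrow> ('j::finite \<Rightarrow> complex^'p^'n) \<Rightarrow> real \<Rightarrow> real \<Rightarrow> real
   \<Rightarrow> ('k \<Rightarrow> complex^'n^'n) \<Rightarrow> ('j \<Rightarrow> complex^'n) \<Rightarrow> ('j \<Rightarrow> 'k) \<Rightarrow> complex^'p \<Rightarrow> ereal" where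
  "hobj A y P \<nu> \<eta> C W B \<Gamma> x =
     (if (\<forall>k. unitary_mat (W k)) \<and> norm x \<le> C
      then ereal (\<nu> * (norm (A *v x - y))\<^sup>2
                 + (\<Sum>j\<in>UNIV. (norm (W (\<Gamma> j) *v (P j *v x) - B j))\<^sup>2 + \<eta>\<^sup>2 * real (l0 (B j))))
      else \<infinity>)"

definition sc_cost :: "real \<Rightarrow> complex^'n^'n \<Rightarrow> complex^'n \<Rightarrow> real" where
  "sc_cost \<eta> Wk z = (norm (Wk *v z - hard_thr \<eta> (Wk *v z)))\<^sup>2 + \<eta>\<^sup>2 * real (l0 (hard_thr \<eta> (Wk *v z)))"

text \<open>One iteration of A2, from (B', Gamma', x') = iterate t-1 to (W, B, Gamma, x) = iterate t.\<close>
definition A2_step ::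
  "complex^'p^'m \<Rightarrow> complex^'m \<Rightarrow> ('j::finite \<Rightarrow> complex^'p^'n) \<Rightarrow> real \<Rightarrow> real \<Rightarrow> real
   \<Rightarrow> ('j \<Rightarrow> complex^'n) \<Rightarrow> ('j \<Rightarrow> 'k::{finite,linorder}) \<Rightarrow> complex^'p
   \<Rightarrow> ('k \<Rightarrow> complex^'n^'n) \<Rightarrow> ('j \<Rightarrow> complex^'n) \<Rightarrow> ('j \<Rightarrow> 'k) \<Rightarrow> complex^'p \<Rightarrow> bool" where
  "A2_step A y P \<nu> \<eta> C B' \<Gamma>' x' W B \<Gamma> x \<longleftrightarrow>
     \<comment> \<open>(1) transform update via full SVD of Q_k R_k^H\<close>
     (\<forall>k. \<exists>U S V. is_full_svd (\<Sum>j\<in>{j. \<Gamma>' j = k}. outer (P j *v x') (B' j)) U S V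
                  \<and> W k = V ** cadj U)
     \<comment> \<open>(2) sparse coding and clustering, smallest minimizing index\<close>
     \<and> (\<forall>j. (\<forall>k. sc_cost \<eta> (W (\<Gamma> j)) (P j *v x') \<le> sc_cost \<eta> (W k) (P j *v x'))
            \<and> (\<forall>k. k < \<Gamma> j \<longrightarrow> sc_cost \<eta> (W (\<Gamma> j)) (P j *v x') < sc_cost \<eta> (W k) (P j *v x'))
            \<and> B j = hard_thr \<eta> (W (\<Gamma> j) *v (P j *v x')))
     \<comment> \<open>(3) image update: global minimizer over the ball of radius C\<close>
     \<and> norm x \<le> C
     \<and> (\<forall>z. norm z \<le> C \<longrightarrow>
           \<nu> * (norm (A *v x - y))\<^sup>2 + (\<Sum>j\<in>UNIV. (norm (W (\<Gamma> j) *v (P j *v x) - B j))\<^sup>2)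
         \<le> \<nu> * (norm (A *v z - y))\<^sup>2 + (\<Sum>j\<in>UNIV. (norm (W (\<Gamma> j) *v (P j *v z) - B j))\<^sup>2))"

text \<open>Iterates indexed by t = 0,1,2,...; t = 0 is the (arbitrary) initialization.\<close>
definition A2_iterates where
  "A2_iterates A y P \<nu> \<eta> C Wt Bt \<Gamma>t xt \<longleftrightarrow>
     (\<forall>t. A2_step A y P \<nu> \<eta> C (Bt t) (\<Gamma>t t) (xt t)
                   (Wt (Suc t)) (Bt (Suc t)) (\<Gamma>t (Suc t)) (xt (Suc t)))"

section \<open>Accumulation points (Gamma carries the discrete topology)\<close>

definition is_accum_point ::
  "(nat \<Rightarrow> 'k \<Rightarrow> complex^'n^'n) \<Rightarrow> (nat \<Rightarrow> 'j \<Rightarrow> complex^'n) \<Rightarrow> (nat \<Rightarrow> 'j \<Rightarrow> 'k) \<Rightarrow> (nat \<Rightarrow> complex^'p)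
   \<Rightarrow> ('k \<Rightarrow> complex^'n^'n) \<Rightarrow> ('j \<Rightarrow> complex^'n) \<Rightarrow> ('j \<Rightarrow> 'k) \<Rightarrow> complex^'p \<Rightarrow> bool" where
  "is_accum_point Wt Bt \<Gamma>t xt W B \<Gamma> x \<longleftrightarrow>
     (\<exists>r. strict_mono r
        \<and> (\<forall>k. (\<lambda>i. Wt (r i) k) \<longlonglongrightarrow> W k)
        \<and> (\<forall>j. (\<lambda>i. Bt (r i) j) \<longlonglongrightarrow> B j)
        \<and> (\<forall>\<^sub>F i in sequentially. \<Gamma>t (r i) = \<Gamma>)
        \<and> (\<lambda>i. xt (r i)) \<longlonglongrightarrow> x)"

definition iter_close :: "real \<Rightarrow> ('k \<Rightarrow> complex^'n^'n) \<Rightarrow> ('j \<Rightarrow> complex^'n) \<Rightarrow> ('j \<Rightarrow> 'k) \<Rightarrow> complex^'p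
   \<Rightarrow> ('k \<Rightarrow> complex^'n^'n) \<Rightarrow> ('j \<Rightarrow> complex^'n) \<Rightarrow> ('j \<Rightarrow> 'k) \<Rightarrow> complex^'p \<Rightarrow> bool" where
  "iter_close \<epsilon> W B \<Gamma> x W' B' \<Gamma>' x' \<longleftrightarrow>
     (\<forall>k. dist (W k) (W' k) < \<epsilon>) \<and> (\<forall>j. dist (B j) (B' j) < \<epsilon>) \<and> \<Gamma> = \<Gamma>' \<and> dist x x' < \<epsilon>"

end

theory Submission
  imports Defs
begin

(* Algorithm A2 is exact block coordinate descent on h: the transform update solves an
   orthogonal Procrustes problem via the SVD, hard thresholding with the best cluster
   minimizes over (B, Gamma), and step (3) minimizes over x. Hence the objective values
   decrease to a limit h*. The iterates stay in a compact set, every accumulation point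
   attains h*, and a subsequence argument shows that the iterates approach the set of
   accumulation points.
   Optimality in x passes directly to the limit. For W and for (B, Gamma) one passes to the
   neighbouring iterates: the values there also tend to h*, which forces the limit of the
   updated transforms, and the limit x' of the preceding images, to be just as good; x' and x
   agree on all patches because the x-subproblem is a convex quadratic.
   Finally, a perturbation of B with entries below eta/2 cannot annihilate a nonzero entry
   (these have modulus at least eta), while at a zero entry the limit patch value has modulus
   at most eta, so the cross term is paid for by the eta^2 saved in the l0 penalty. *)

section \<open>Unitary matrices and the Procrustes problem\<close>

lemma power2_norm_vec: "(norm v)\<^sup>2 = (\<Sum>i\<in>UNIV. (norm (v $ i))\<^sup>2)"
  by (simp add: norm_vec_def L2_set_def sum_nonneg)

lemma l0_eq_sum: "real (l0 b) = (\<Sum>i\<in>UNIV. if b $ i \<noteq> 0 then 1 else 0)"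
  unfolding l0_def by (simp add: sum.If_cases)

lemma norm_vec_le_sum: "norm (v::'a::real_normed_vector^'n) \<le> (\<Sum>i\<in>UNIV. norm (v $ i))"
  by (simp add: norm_vec_def L2_set_le_sum)

definition cinner :: "complex^'n \<Rightarrow> complex^'n \<Rightarrow> complex" where
  "cinner u v = (\<Sum>i\<in>UNIV. u $ i * cnj (v $ i))"

lemma inner_eq_Re_cinner: "inner u v = Re (cinner u v)"
  by (simp add: inner_vec_def cinner_def inner_complex_def)

lemma power2_norm_eq_Re_cinner: "(norm u)\<^sup>2 = Re (cinner u u)"
  by (simp add: power2_norm_eq_inner inner_eq_Re_cinner)

lemma cadj_cadj [simp]: "cadj (cadj M) = M"
  by (simp add: cadj_def vec_eq_iff)

lemma cadj_matrix_mult: "cadj (M ** N) = cadj N ** cadj M"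
  by (simp add: cadj_def vec_eq_iff matrix_matrix_mult_def mult.commute)

lemma cinner_matrix_vector_mult: "cinner (M *v u) v = cinner u (cadj M *v v)"
proof -
  have "cinner (M *v u) v = (\<Sum>i\<in>UNIV. \<Sum>k\<in>UNIV. M $ i $ k * u $ k * cnj (v $ i))"
    by (simp add: cinner_def matrix_vector_mult_def sum_distrib_right)
  also have "\<dots> = (\<Sum>k\<in>UNIV. \<Sum>i\<in>UNIV. M $ i $ k * u $ k * cnj (v $ i))"
    by (rule sum.swap)
  also have "\<dots> = cinner u (cadj M *v v)"
    by (simp add: cinner_def matrix_vector_mult_def cadj_def sum_distrib_left mult_ac)
  finally show ?thesis .
qed

lemma unitary_mat_norm_preserving: "unitary_mat W \<Longrightarrow> norm (W *v u) = norm u"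
  using power2_eq_iff_nonneg[of "norm (W *v u)" "norm u"]
  by (simp add: power2_norm_eq_Re_cinner cinner_matrix_vector_mult matrix_vector_mul_assoc unitary_mat_def)

lemma unitary_mat_right_inverse: "unitary_mat W \<Longrightarrow> W ** cadj W = mat 1"
  unfolding unitary_mat_def using matrix_left_right_inverse by blast

lemma unitary_mat_mult: "unitary_mat M \<Longrightarrow> unitary_mat N \<Longrightarrow> unitary_mat (M ** N)"
  unfolding unitary_mat_def cadj_matrix_mult by (metis matrix_mul_assoc matrix_mul_lid)

lemma unitary_mat_cadj: "unitary_mat M \<Longrightarrow> unitary_mat (cadj M)"
  unfolding unitary_mat_def[of "cadj M"] by (simp add: unitary_mat_right_inverse)

lemma unitary_mat_1: "unitary_mat (mat 1)"
proof -
  have "cadj (mat 1 :: complex^'n^'n) = mat 1"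
    by (auto simp: cadj_def mat_def vec_eq_iff)
  then show ?thesis by (simp add: unitary_mat_def matrix_mul_lid)
qed

lemma power2_norm_column: "(norm (column i X))\<^sup>2 = Re ((cadj X ** X) $ i $ i)"
  by (simp add: power2_norm_eq_Re_cinner cinner_def column_def cadj_def matrix_matrix_mult_def mult.commute)

lemma unitary_mat_column_norm: "unitary_mat X \<Longrightarrow> norm (column i X) = 1"
  using power2_norm_column[of i X] norm_ge_zero[of "column i X"]
  by (simp add: unitary_mat_def mat_def power2_eq_1_iff)

lemma unitary_mat_norm: "unitary_mat X \<Longrightarrow> norm X = sqrt (real CARD('n))"
  for X :: "complex^'n^'n"
proof -
  assume u: "unitary_mat X"
  have "(norm (X $ i))\<^sup>2 = Re ((X ** cadj X) $ i $ i)" for i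
    by (simp add: power2_norm_eq_Re_cinner cinner_def cadj_def matrix_matrix_mult_def)
  then have "(norm X)\<^sup>2 = real CARD('n)"
    using unitary_mat_right_inverse[OF u] by (simp add: power2_norm_vec mat_def)
  then show ?thesis by (simp add: real_sqrt_unique)
qed

lemma trace_matrix_mult_sum:
  "finite S \<Longrightarrow> trace (W ** sum f S) = (\<Sum>j\<in>S. trace (W ** f j))"
  for W :: "'a::comm_semiring_1^'m^'n"
proof (induction S rule: finite_induct)
  case empty
  then show ?case by (simp add: trace_def matrix_matrix_mult_def)
next
  case (insert j S)
  then show ?case by (simp add: matrix_add_ldistrib Determinants.trace_add)
qed

lemma cinner_eq_trace_outer: "cinner (W *v u) b = trace (W ** outer u b)"
  by (simp add: cinner_def trace_def matrix_matrix_mult_def matrix_vector_mult_def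
      outer_def sum_distrib_right sum_distrib_left mult_ac)

lemma trace_mult_diagonal:
  assumes "\<forall>i j. i \<noteq> j \<longrightarrow> S $ i $ j = 0"
  shows "trace (G ** S) = (\<Sum>i\<in>UNIV. G $ i $ i * S $ i $ i)"
proof -
  have "(\<Sum>k\<in>UNIV. G $ i $ k * S $ k $ i) = G $ i $ i * S $ i $ i" for i
    using assms by (subst sum.remove[of _ i]) auto
  then show ?thesis by (simp add: trace_def matrix_matrix_mult_def)
qed

lemma trace_mult_svd: "trace (X ** (U ** S ** cadj V)) = trace ((cadj V ** (X ** U)) ** S)"
  by (metis matrix_mul_assoc trace_mul_sym)

text \<open>Orthogonal Procrustes. In SVD coordinates Re tr (W M) is a sum of the singular values
  weighted by the real parts of the diagonal entries of the unitary matrix V^H W U, which are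
  at most 1.\<close>
lemma procrustes_trace_maximal:
  assumes svd: "is_full_svd M U S V" and W: "unitary_mat W"
  shows "Re (trace (W ** M)) \<le> Re (trace ((V ** cadj U) ** M))"
proof -
  have U: "unitary_mat U" and V: "unitary_mat V" and diag: "\<forall>i j. i \<noteq> j \<longrightarrow> S $ i $ j = 0"
    and sing: "\<forall>i. S $ i $ i \<in> \<real> \<and> 0 \<le> Re (S $ i $ i)" and M: "M = U ** S ** cadj V"
    using svd unfolding is_full_svd_def by auto
  have Re_mult_S: "Re (z * S $ i $ i) = Re z * Re (S $ i $ i)" for z i
    using sing by (auto simp: complex_is_Real_iff)
  have "Re ((cadj V ** (W ** U)) $ i $ i) \<le> 1" for i
  proof -
    have "Re ((cadj V ** (W ** U)) $ i $ i) = inner (column i (W ** U)) (column i V)"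
      by (simp add: inner_eq_Re_cinner cinner_def column_def matrix_matrix_mult_def cadj_def
          mult.commute)
    also have "\<dots> \<le> norm (column i (W ** U)) * norm (column i V)"
      by (rule norm_cauchy_schwarz)
    also have "\<dots> = 1"
      using unitary_mat_column_norm[OF unitary_mat_mult[OF W U]] unitary_mat_column_norm[OF V] by simp
    finally show ?thesis .
  qed
  then have "Re (trace (W ** M)) \<le> (\<Sum>i\<in>UNIV. Re (S $ i $ i))"
    unfolding M trace_mult_svd trace_mult_diagonal[OF diag] Re_sum Re_mult_S
    by (intro sum_mono) (use sing mult_right_mono in fastforce)
  also have "\<dots> = Re (trace ((V ** cadj U) ** M))"
  proof -
    have "cadj V ** ((V ** cadj U) ** U) = mat 1"
      using U V unfolding unitary_mat_def by (metis matrix_mul_assoc matrix_mul_lid)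
    then show ?thesis
      unfolding M trace_mult_svd trace_mult_diagonal[OF diag] by (simp add: mat_def)
  qed
  finally show ?thesis .
qed

lemma is_full_svd_unitary: "is_full_svd M U S V \<Longrightarrow> unitary_mat (V ** cadj U)"
  unfolding is_full_svd_def by (auto intro: unitary_mat_mult unitary_mat_cadj)

lemma sum_residuals_unitary_eq:
  fixes W :: "'k::finite \<Rightarrow> complex^'n^'n" and z B :: "'j::finite \<Rightarrow> complex^'n"
  assumes "\<forall>k. unitary_mat (W k)"
  shows "(\<Sum>j\<in>UNIV. (norm (W (\<Gamma> j) *v z j - B j))\<^sup>2)
     = (\<Sum>j\<in>UNIV. (norm (z j))\<^sup>2 + (norm (B j))\<^sup>2)
       - 2 * (\<Sum>k\<in>UNIV. Re (trace (W k ** (\<Sum>j\<in>{j. \<Gamma> j = k}. outer (z j) (B j)))))"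
proof -
  have "(\<Sum>j\<in>UNIV. (norm (W (\<Gamma> j) *v z j - B j))\<^sup>2)
      = (\<Sum>j\<in>UNIV. (norm (z j))\<^sup>2 + (norm (B j))\<^sup>2 - 2 * Re (trace (W (\<Gamma> j) ** outer (z j) (B j))))"
  proof (rule sum.cong)
    fix j
    have "(norm (W (\<Gamma> j) *v z j - B j))\<^sup>2
        = (norm (W (\<Gamma> j) *v z j))\<^sup>2 + (norm (B j))\<^sup>2 - 2 * inner (W (\<Gamma> j) *v z j) (B j)"
      using dot_norm_neg[of "W (\<Gamma> j) *v z j" "B j"] by simp
    then show "(norm (W (\<Gamma> j) *v z j - B j))\<^sup>2
        = (norm (z j))\<^sup>2 + (norm (B j))\<^sup>2 - 2 * Re (trace (W (\<Gamma> j) ** outer (z j) (B j)))"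
      using assms by (simp add: unitary_mat_norm_preserving inner_eq_Re_cinner cinner_eq_trace_outer)
  qed simp
  also have "\<dots> = (\<Sum>j\<in>UNIV. (norm (z j))\<^sup>2 + (norm (B j))\<^sup>2)
      - 2 * (\<Sum>j\<in>UNIV. Re (trace (W (\<Gamma> j) ** outer (z j) (B j))))"
    by (simp add: sum_subtractf sum_distrib_left)
  also have "(\<Sum>j\<in>UNIV. Re (trace (W (\<Gamma> j) ** outer (z j) (B j))))
      = (\<Sum>k\<in>UNIV. \<Sum>j\<in>{j. \<Gamma> j = k}. Re (trace (W k ** outer (z j) (B j))))"
    by (subst sum.group[symmetric, of UNIV UNIV \<Gamma>]) auto
  also have "\<dots> = (\<Sum>k\<in>UNIV. Re (trace (W k ** (\<Sum>j\<in>{j. \<Gamma> j = k}. outer (z j) (B j)))))"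
    by (simp add: trace_matrix_mult_sum)
  finally show ?thesis .
qed

lemma svd_transform_update_optimal:
  fixes W W' :: "'k::finite \<Rightarrow> complex^'n^'n" and z B :: "'j::finite \<Rightarrow> complex^'n"
  assumes svd: "\<forall>k. \<exists>U S V. is_full_svd (\<Sum>j\<in>{j. \<Gamma> j = k}. outer (z j) (B j)) U S V
                   \<and> W k = V ** cadj U"
    and W': "\<forall>k. unitary_mat (W' k)"
  shows "\<forall>k. unitary_mat (W k)"
    and "(\<Sum>j\<in>UNIV. (norm (W (\<Gamma> j) *v z j - B j))\<^sup>2) \<le> (\<Sum>j\<in>UNIV. (norm (W' (\<Gamma> j) *v z j - B j))\<^sup>2)"
proof -
  show W: "\<forall>k. unitary_mat (W k)"
  proof
    fix k
    from svd obtain U S V where "is_full_svd (\<Sum>j\<in>{j. \<Gamma> j = k}. outer (z j) (B j)) U S V"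
      and "W k = V ** cadj U" by blast
    then show "unitary_mat (W k)" by (simp add: is_full_svd_unitary)
  qed
  have "Re (trace (W' k ** (\<Sum>j\<in>{j. \<Gamma> j = k}. outer (z j) (B j))))
      \<le> Re (trace (W k ** (\<Sum>j\<in>{j. \<Gamma> j = k}. outer (z j) (B j))))" for k
  proof -
    from svd obtain U S V where "is_full_svd (\<Sum>j\<in>{j. \<Gamma> j = k}. outer (z j) (B j)) U S V"
      and "W k = V ** cadj U" by blast
    then show ?thesis using procrustes_trace_maximal[of _ U S V "W' k"] W' by simp
  qed
  then show "(\<Sum>j\<in>UNIV. (norm (W (\<Gamma> j) *v z j - B j))\<^sup>2)
      \<le> (\<Sum>j\<in>UNIV. (norm (W' (\<Gamma> j) *v z j - B j))\<^sup>2)"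
    unfolding sum_residuals_unitary_eq[OF W] sum_residuals_unitary_eq[OF W'] by (simp add: sum_mono)
qed

lemma hard_thr_nth: "hard_thr \<eta> z $ i = 0 \<or> (hard_thr \<eta> z $ i = z $ i \<and> \<eta> \<le> norm (z $ i))"
  by (auto simp: hard_thr_def)

lemma hard_thr_minimal:
  assumes "0 \<le> \<eta>"
  shows "(norm (z - hard_thr \<eta> z))\<^sup>2 + \<eta>\<^sup>2 * real (l0 (hard_thr \<eta> z))
       \<le> (norm (z - b))\<^sup>2 + \<eta>\<^sup>2 * real (l0 b)"
proof -
  have "(norm (z $ i - hard_thr \<eta> z $ i))\<^sup>2 + \<eta>\<^sup>2 * (if hard_thr \<eta> z $ i \<noteq> 0 then 1 else 0)
      \<le> (norm (z $ i - b $ i))\<^sup>2 + \<eta>\<^sup>2 * (if b $ i \<noteq> 0 then 1 else 0)" for i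
  proof (cases "norm (z $ i) < \<eta>")
    case True
    then have "(norm (z $ i))\<^sup>2 \<le> \<eta>\<^sup>2" by (simp add: power_mono)
    with True show ?thesis by (auto simp: hard_thr_def intro!: add_increasing)
  next
    case False
    then have "\<eta>\<^sup>2 \<le> (norm (z $ i))\<^sup>2" using assms by (simp add: power_mono)
    with False show ?thesis by (auto simp: hard_thr_def)
  qed
  then show ?thesis
    unfolding power2_norm_vec l0_eq_sum sum_distrib_left sum.distrib[symmetric]
    by (intro sum_mono) simp
qed

lemma norm_hard_thr_le: "norm (hard_thr \<eta> z) \<le> norm z"
  unfolding norm_vec_def by (rule L2_set_mono) (auto simp: hard_thr_def)

text \<open>A hard thresholding of z in which an entry with modulus exactly \<eta> may go either way;
  unlike the graph of hard_thr, this relation is closed.\<close>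
definition is_hard_thr :: "real \<Rightarrow> complex^'n \<Rightarrow> complex^'n \<Rightarrow> bool" where
  "is_hard_thr \<eta> z b \<longleftrightarrow>
     (\<forall>i. (b $ i \<noteq> 0 \<longrightarrow> b $ i = z $ i \<and> \<eta> \<le> norm (b $ i)) \<and> (b $ i = 0 \<longrightarrow> norm (z $ i) \<le> \<eta>))"

section \<open>Limits and convergent subsequences\<close>

lemma tendsto_matrix_vector_mult:
  fixes M :: "'x \<Rightarrow> complex^'a^'b"
  assumes "(M \<longlongrightarrow> M0) F" "(v \<longlongrightarrow> v0) F"
  shows "((\<lambda>t. M t *v v t) \<longlongrightarrow> M0 *v v0) F"
  unfolding matrix_vector_mult_def
  by (intro tendsto_vec_lambda tendsto_sum tendsto_mult tendsto_vec_nth assms)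

lemma unitary_mat_limit:
  fixes W :: "'x \<Rightarrow> complex^'n^'n"
  assumes lim: "(W \<longlongrightarrow> W0) F" and unitary: "\<forall>\<^sub>F t in F. unitary_mat (W t)" and "F \<noteq> bot"
  shows "unitary_mat W0"
proof -
  have "((\<lambda>t. cadj (W t) ** W t) \<longlongrightarrow> cadj W0 ** W0) F"
    unfolding cadj_def matrix_matrix_mult_def
    by (intro tendsto_vec_lambda tendsto_sum tendsto_mult tendsto_cnj tendsto_vec_nth lim)
  moreover have "((\<lambda>t. cadj (W t) ** W t) \<longlongrightarrow> mat 1) F"
    using unitary by (simp add: unitary_mat_def tendsto_eventually)
  ultimately show ?thesis
    unfolding unitary_mat_def using tendsto_unique[OF \<open>F \<noteq> bot\<close>] by blast
qed

text \<open>Because of the gap between 0 and \<eta>, no entry can switch between zero and nonzero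
  near the limit.\<close>
lemma l0_eventually_eq_limit:
  fixes b :: "'x \<Rightarrow> complex^'n"
  assumes lim: "(b \<longlongrightarrow> b0) F" and gap: "\<forall>\<^sub>F t in F. \<forall>i. b t $ i = 0 \<or> \<eta> \<le> norm (b t $ i)"
    and "\<eta> > 0"
  shows "\<forall>\<^sub>F t in F. l0 (b t) = l0 b0"
proof -
  have "\<forall>\<^sub>F t in F. (b t $ i \<noteq> 0) = (b0 $ i \<noteq> 0)" for i
  proof (cases "b0 $ i = 0")
    case True
    have "((\<lambda>t. b t $ i) \<longlongrightarrow> b0 $ i) F" by (intro tendsto_vec_nth lim)
    with True have "((\<lambda>t. norm (b t $ i)) \<longlongrightarrow> 0) F"
      using tendsto_norm by fastforce
    then have "\<forall>\<^sub>F t in F. norm (b t $ i) < \<eta>"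
      using \<open>\<eta> > 0\<close> by (rule order_tendstoD)
    with gap show ?thesis by eventually_elim (use True in force)
  next
    case False
    then show ?thesis
      using tendsto_imp_eventually_ne[OF tendsto_vec_nth[OF lim] False] by (auto elim: eventually_mono)
  qed
  then have "\<forall>\<^sub>F t in F. \<forall>i. (b t $ i \<noteq> 0) = (b0 $ i \<noteq> 0)"
    by (rule eventually_all_finite)
  then show ?thesis by eventually_elim (simp add: l0_def)
qed

lemma hard_thr_limit:
  fixes z :: "'x \<Rightarrow> complex^'n"
  assumes lim_z: "(z \<longlongrightarrow> z0) F" and lim_b: "((\<lambda>t. hard_thr \<eta> (z t)) \<longlongrightarrow> b0) F"
    and F: "F \<noteq> bot" and "0 \<le> \<eta>"
  shows "is_hard_thr \<eta> z0 b0"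
  unfolding is_hard_thr_def
proof (intro allI)
  fix i
  have lz: "((\<lambda>t. z t $ i) \<longlongrightarrow> z0 $ i) F" by (intro tendsto_vec_nth lim_z)
  have lb: "((\<lambda>t. hard_thr \<eta> (z t) $ i) \<longlongrightarrow> b0 $ i) F" by (intro tendsto_vec_nth lim_b)
  have b0_eq: "b0 $ i = z0 $ i" if ev: "\<forall>\<^sub>F t in F. \<eta> \<le> norm (z t $ i)"
  proof -
    from ev have "\<forall>\<^sub>F t in F. hard_thr \<eta> (z t) $ i = z t $ i"
      by eventually_elim (simp add: hard_thr_def)
    then have "((\<lambda>t. hard_thr \<eta> (z t) $ i) \<longlongrightarrow> z0 $ i) F"
      using lz by (simp add: tendsto_cong)
    then show ?thesis using tendsto_unique[OF F lb] by simp
  qed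
  show "(b0 $ i \<noteq> 0 \<longrightarrow> b0 $ i = z0 $ i \<and> \<eta> \<le> norm (b0 $ i)) \<and> (b0 $ i = 0 \<longrightarrow> norm (z0 $ i) \<le> \<eta>)"
  proof (rule conjI; intro impI)
    assume "b0 $ i \<noteq> 0"
    then have "\<forall>\<^sub>F t in F. hard_thr \<eta> (z t) $ i \<noteq> 0"
      by (rule tendsto_imp_eventually_ne[OF lb])
    then have ev: "\<forall>\<^sub>F t in F. \<eta> \<le> norm (z t $ i)"
      by eventually_elim (simp add: hard_thr_def split: if_splits)
    have "\<eta> \<le> norm (z0 $ i)"
      by (rule tendsto_lowerbound[OF tendsto_norm[OF lz] ev F])
    with b0_eq[OF ev] show "b0 $ i = z0 $ i \<and> \<eta> \<le> norm (b0 $ i)" by simp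
  next
    assume b0: "b0 $ i = 0"
    show "norm (z0 $ i) \<le> \<eta>"
    proof (rule ccontr)
      assume big: "\<not> norm (z0 $ i) \<le> \<eta>"
      then have "\<forall>\<^sub>F t in F. \<eta> < norm (z t $ i)"
        using order_tendstoD(1)[OF tendsto_norm[OF lz]] by simp
      then have "b0 $ i = z0 $ i"
        by (intro b0_eq) (auto elim: eventually_mono)
      with b0 big \<open>0 \<le> \<eta>\<close> show False by simp
    qed
  qed
qed

lemma bounded_seq_convergent_subseq:
  fixes f :: "nat \<Rightarrow> 'a::{heine_borel,real_normed_vector}"
  assumes "\<forall>\<^sub>F t in sequentially. norm (f t) \<le> c"
  obtains r :: "nat \<Rightarrow> nat" and l where "strict_mono r" "(\<lambda>t. f (r t)) \<longlonglongrightarrow> l"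
proof -
  obtain N where N: "\<forall>t\<ge>N. norm (f t) \<le> c"
    using assms unfolding eventually_sequentially by blast
  then have "bounded (range (\<lambda>t. f (t + N)))"
    unfolding bounded_iff by (intro exI[of _ c]) auto
  then obtain l r where r: "strict_mono r" "((\<lambda>t. f (t + N)) \<circ> r) \<longlonglongrightarrow> l"
    using bounded_imp_convergent_subsequence by blast
  have "strict_mono (\<lambda>t. r t + N)"
    using r(1) by (simp add: strict_mono_def)
  with r(2) show ?thesis by (intro that) (simp_all add: o_def)
qed

lemma bounded_fun_seq_convergent_subseq:
  fixes f :: "nat \<Rightarrow> 'i::finite \<Rightarrow> 'a::{heine_borel,real_normed_vector}"
  assumes "\<forall>\<^sub>F t in sequentially. \<forall>i. norm (f t i) \<le> c i"
  obtains r :: "nat \<Rightarrow> nat" and l where "strict_mono r" "\<forall>i. (\<lambda>t. f (r t) i) \<longlonglongrightarrow> l i"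
proof -
  have "\<forall>\<^sub>F t in sequentially. norm (\<chi> i. f t i) \<le> (\<Sum>i\<in>UNIV. c i)"
    using assms
  proof eventually_elim
    case (elim t)
    have "norm (\<chi> i. f t i) \<le> (\<Sum>i\<in>UNIV. norm (f t i))"
      using norm_vec_le_sum[of "\<chi> i. f t i"] by simp
    also have "\<dots> \<le> (\<Sum>i\<in>UNIV. c i)"
      using elim by (intro sum_mono) simp
    finally show ?case .
  qed
  then obtain r L where r: "strict_mono r" "(\<lambda>t. \<chi> i. f (r t) i) \<longlonglongrightarrow> L"
    by (rule bounded_seq_convergent_subseq)
  have "\<forall>i. (\<lambda>t. f (r t) i) \<longlonglongrightarrow> L $ i"
    using tendsto_vec_nth[OF r(2)] by simp
  with r(1) show ?thesis by (rule that)
qed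

lemma finite_range_constant_subseq:
  fixes g :: "nat \<Rightarrow> 'b::finite"
  obtains r :: "nat \<Rightarrow> nat" and v where "strict_mono r" "\<forall>t. g (r t) = v"
proof -
  obtain v where "infinite (g -` {v})"
    using inf_img_fin_domE[of g UNIV] by auto
  then obtain r :: "nat \<Rightarrow> nat" where "strict_mono r" "\<forall>t. r t \<in> g -` {v}"
    using infinite_enumerate by blast
  then show ?thesis by (intro that[of r v]) auto
qed

section \<open>The objective and its partial minimizers\<close>

lemma perturbed_entry_cost:
  fixes w z b d :: complex
  assumes b: "(b \<noteq> 0 \<longrightarrow> b = z \<and> \<eta> \<le> norm b) \<and> (b = 0 \<longrightarrow> norm z \<le> \<eta>)"
    and d: "norm d < \<eta> / 2"
  shows "\<eta>\<^sup>2 * (if b \<noteq> 0 then 1 else 0)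
     \<le> (norm (w - z))\<^sup>2 - (norm (w - b))\<^sup>2 + (norm (w - b - d))\<^sup>2 + \<eta>\<^sup>2 * (if b + d \<noteq> 0 then 1 else 0)"
proof (cases "b = 0")
  case False
  then have "b = z" and "\<eta> \<le> norm b" using b by auto
  moreover have "b + d \<noteq> 0"
  proof
    assume "b + d = 0"
    then have "norm b = norm d" by (metis add.inverse_unique norm_minus_cancel)
    with \<open>\<eta> \<le> norm b\<close> d norm_ge_zero[of d] show False by linarith
  qed
  ultimately show ?thesis using False by simp
next
  case True
  then have "norm z \<le> \<eta>" using b by simp
  have "inner z d \<le> norm z * norm d" by (rule norm_cauchy_schwarz)
  also have "\<dots> \<le> \<eta> * (\<eta> / 2)"
    using \<open>norm z \<le> \<eta>\<close> d norm_ge_zero[of z] norm_ge_zero[of d]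
    by (intro mult_mono) linarith+
  finally have "2 * inner z d \<le> \<eta>\<^sup>2" by (simp add: power2_eq_square)
  moreover have "(norm (w - z))\<^sup>2 - (norm w)\<^sup>2 + (norm (w - d))\<^sup>2 = (norm (w - z - d))\<^sup>2 - 2 * inner z d"
    unfolding power2_norm_eq_inner
    by (simp add: inner_diff_left inner_diff_right inner_commute algebra_simps)
  ultimately have "0 \<le> (norm (w - z))\<^sup>2 - (norm w)\<^sup>2 + (norm (w - d))\<^sup>2 + \<eta>\<^sup>2"
    using zero_le_power2[of "norm (w - z - d)"] by linarith
  with True show ?thesis by auto
qed

lemma perturbed_patch_cost:
  fixes w z b d :: "complex^'n"
  assumes "is_hard_thr \<eta> z b" and "\<forall>i. norm (d $ i) < \<eta> / 2"
  shows "\<eta>\<^sup>2 * real (l0 b)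
     \<le> (norm (w - z))\<^sup>2 - (norm (w - b))\<^sup>2 + (norm (w - b - d))\<^sup>2 + \<eta>\<^sup>2 * real (l0 (b + d))"
  using assms perturbed_entry_cost[of "b $ i" "z $ i" \<eta> "d $ i" "w $ i" for i]
  unfolding power2_norm_vec l0_eq_sum sum_distrib_left sum_subtractf[symmetric] sum.distrib[symmetric]
    is_hard_thr_def
  by (intro sum_mono) simp

lemma norm_add_scaleR_le:
  fixes x d :: "'a::real_normed_vector"
  assumes "norm x \<le> C" "norm (x + d) \<le> C" "0 \<le> s" "s \<le> 1"
  shows "norm (x + s *\<^sub>R d) \<le> C"
proof -
  have "x + s *\<^sub>R d = (1 - s) *\<^sub>R x + s *\<^sub>R (x + d)" by (simp add: algebra_simps)
  then have "norm (x + s *\<^sub>R d) \<le> (1 - s) * norm x + s * norm (x + d)"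
    using assms by (metis abs_of_nonneg diff_ge_0_iff_ge norm_scaleR norm_triangle_ineq)
  also have "\<dots> \<le> (1 - s) * C + s * C" using assms by (intro add_mono mult_left_mono) auto
  finally show ?thesis by (simp add: algebra_simps)
qed

lemma power2_norm_add_scaleR:
  fixes a b :: "'a::real_inner"
  shows "(norm (a + s *\<^sub>R b))\<^sup>2 = (norm a)\<^sup>2 + 2 * s * inner a b + s\<^sup>2 * (norm b)\<^sup>2"
  unfolding power2_norm_eq_inner
  by (simp add: inner_add_left inner_add_right inner_commute power2_eq_square algebra_simps)

locale transform_learning =
  fixes A :: "complex^'p^'m" and y :: "complex^'m" and P :: "'j::finite \<Rightarrow> complex^'p^'n"
    and \<nu> \<eta> C :: real
  assumes nu_nonneg: "0 \<le> \<nu>" and eta_pos: "0 < \<eta>"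
begin

definition fit :: "('k \<Rightarrow> complex^'n^'n) \<Rightarrow> ('j \<Rightarrow> complex^'n) \<Rightarrow> ('j \<Rightarrow> 'k) \<Rightarrow> complex^'p \<Rightarrow> real"
  where "fit W B \<Gamma> x =
    \<nu> * (norm (A *v x - y))\<^sup>2 + (\<Sum>j\<in>UNIV. (norm (W (\<Gamma> j) *v (P j *v x) - B j))\<^sup>2)"

definition objective :: "('k \<Rightarrow> complex^'n^'n) \<Rightarrow> ('j \<Rightarrow> complex^'n) \<Rightarrow> ('j \<Rightarrow> 'k) \<Rightarrow> complex^'p \<Rightarrow> real"
  where "objective W B \<Gamma> x = fit W B \<Gamma> x + (\<Sum>j\<in>UNIV. \<eta>\<^sup>2 * real (l0 (B j)))"

definition patch_cost :: "complex^'n^'n \<Rightarrow> complex^'n \<Rightarrow> complex^'p \<Rightarrow> 'j \<Rightarrow> real"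
  where "patch_cost V b x j = (norm (V *v (P j *v x) - b))\<^sup>2 + \<eta>\<^sup>2 * real (l0 b)"

lemma hobj_eq_objective:
  "hobj A y P \<nu> \<eta> C W B \<Gamma> x =
     (if (\<forall>k. unitary_mat (W k)) \<and> norm x \<le> C then ereal (objective W B \<Gamma> x) else \<infinity>)"
  by (simp add: hobj_def objective_def fit_def sum.distrib)

lemma objective_eq_patch_costs:
  "objective W B \<Gamma> x = \<nu> * (norm (A *v x - y))\<^sup>2 + (\<Sum>j\<in>UNIV. patch_cost (W (\<Gamma> j)) (B j) x j)"
  by (simp add: objective_def fit_def patch_cost_def sum.distrib)

lemma objective_nonneg: "0 \<le> objective W B \<Gamma> x"
  unfolding objective_def fit_def using nu_nonneg by (auto intro!: add_nonneg_nonneg sum_nonneg)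

lemma patch_cost_sparse_coding_minimal:
  "patch_cost V (hard_thr \<eta> (V *v (P j *v x))) x j \<le> patch_cost V b x j"
  unfolding patch_cost_def using hard_thr_minimal[of \<eta> "V *v (P j *v x)" b] eta_pos by simp

definition fit_deriv ::
  "('k \<Rightarrow> complex^'n^'n) \<Rightarrow> ('j \<Rightarrow> complex^'n) \<Rightarrow> ('j \<Rightarrow> 'k) \<Rightarrow> complex^'p \<Rightarrow> complex^'p \<Rightarrow> real"
  where
  "fit_deriv W B \<Gamma> x d = 2 * \<nu> * inner (A *v x - y) (A *v d)
     + (\<Sum>j\<in>UNIV. 2 * inner (W (\<Gamma> j) *v (P j *v x) - B j) (W (\<Gamma> j) *v (P j *v d)))"

definition fit_curv :: "('k \<Rightarrow> complex^'n^'n) \<Rightarrow> ('j \<Rightarrow> 'k) \<Rightarrow> complex^'p \<Rightarrow> real" where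
  "fit_curv W \<Gamma> d = \<nu> * (norm (A *v d))\<^sup>2 + (\<Sum>j\<in>UNIV. (norm (W (\<Gamma> j) *v (P j *v d)))\<^sup>2)"

lemma fit_along_line:
  "fit W B \<Gamma> (x + s *\<^sub>R d) = fit W B \<Gamma> x + s * fit_deriv W B \<Gamma> x d + s\<^sup>2 * fit_curv W \<Gamma> d"
proof -
  have line: "(norm (M *v (x + s *\<^sub>R d) - c))\<^sup>2
      = (norm (M *v x - c))\<^sup>2 + 2 * s * inner (M *v x - c) (M *v d) + s\<^sup>2 * (norm (M *v d))\<^sup>2"
    for M :: "complex^'p^'q" and c
  proof -
    have "M *v (x + s *\<^sub>R d) - c = (M *v x - c) + s *\<^sub>R (M *v d)"
      using linear_cmul[OF matrix_vector_mul_linear[of M]] by (simp add: matrix_vector_right_distrib)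
    then show ?thesis by (simp only: power2_norm_add_scaleR)
  qed
  show ?thesis
    unfolding fit_def fit_deriv_def fit_curv_def matrix_vector_mul_assoc line
    by (simp add: sum.distrib sum_distrib_left algebra_simps del: inner_diff_left inner_diff_right)
qed

lemma fit_curv_nonneg: "0 \<le> fit_curv W \<Gamma> d"
  unfolding fit_curv_def using nu_nonneg by (auto intro!: add_nonneg_nonneg sum_nonneg)

lemma fit_deriv_nonneg_at_ball_minimizer:
  assumes xmin: "\<forall>z. norm z \<le> C \<longrightarrow> fit W B \<Gamma> x \<le> fit W B \<Gamma> z"
    and "norm x \<le> C" "norm (x + d) \<le> C"
  shows "0 \<le> fit_deriv W B \<Gamma> x d"
proof (rule ccontr)
  define L Q where "L = fit_deriv W B \<Gamma> x d" and "Q = fit_curv W \<Gamma> d"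
  assume "\<not> 0 \<le> fit_deriv W B \<Gamma> x d"
  then have L: "L < 0" by (simp add: L_def)
  have Q: "0 \<le> Q" unfolding Q_def by (rule fit_curv_nonneg)
  \<comment> \<open>a step so short that the quadratic term is at most half the (negative) linear one\<close>
  define s where "s = min 1 (- L / (2 * (Q + 1)))"
  have s: "0 < s" "s \<le> 1" "s * Q \<le> - L / 2"
  proof -
    have "L / (2 * (Q + 1)) < 0" using L Q by (intro divide_neg_pos) auto
    then show "0 < s" "s \<le> 1" by (simp_all add: s_def)
    have "s * Q \<le> (- L / (2 * (Q + 1))) * Q" using Q by (intro mult_right_mono) (simp_all add: s_def)
    also have "\<dots> = (- L / 2) * (Q / (Q + 1))" using Q by (simp add: field_simps)
    also have "\<dots> \<le> - L / 2" using L Q by (intro mult_left_le) simp_all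
    finally show "s * Q \<le> - L / 2" .
  qed
  have "fit W B \<Gamma> x \<le> fit W B \<Gamma> (x + s *\<^sub>R d)"
    using xmin norm_add_scaleR_le[OF assms(2,3)] s(1,2) by simp
  then have "0 \<le> s * (L + s * Q)"
    unfolding fit_along_line L_def Q_def by (simp add: power2_eq_square algebra_simps)
  then have "0 \<le> L + s * Q" using s(1) by (simp add: zero_le_mult_iff)
  with s(3) L show False by simp
qed

text \<open>The fit is convex in x and strictly convex in each transformed patch W_{\<Gamma> j} P_j x,
  so all its minimizers over the ball share the patches.\<close>
lemma fit_ball_minimizers_agree_on_patches:
  assumes W: "\<forall>k. unitary_mat (W k)"
    and xmin: "\<forall>z. norm z \<le> C \<longrightarrow> fit W B \<Gamma> x \<le> fit W B \<Gamma> z"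
    and "norm x \<le> C" "norm x' \<le> C" and same: "fit W B \<Gamma> x' = fit W B \<Gamma> x"
  shows "P j *v x' = P j *v x"
proof -
  define d where "d = x' - x"
  have x': "x' = x + 1 *\<^sub>R d" by (simp add: d_def)
  have "0 \<le> fit_deriv W B \<Gamma> x d"
    using fit_deriv_nonneg_at_ball_minimizer[OF xmin] assms(3,4) x' by simp
  moreover have "fit_deriv W B \<Gamma> x d + fit_curv W \<Gamma> d = 0"
    using same fit_along_line[of W B \<Gamma> x 1 d] x' by simp
  ultimately have "fit_curv W \<Gamma> d \<le> 0" by simp
  then have "(\<Sum>j\<in>UNIV. (norm (W (\<Gamma> j) *v (P j *v d)))\<^sup>2) \<le> 0"
    unfolding fit_curv_def using nu_nonneg by (smt (verit) zero_le_mult_iff zero_le_power2)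
  then have "(\<Sum>j\<in>UNIV. (norm (W (\<Gamma> j) *v (P j *v d)))\<^sup>2) = 0"
    by (intro antisym) (simp_all add: sum_nonneg)
  then have "(norm (W (\<Gamma> j) *v (P j *v d)))\<^sup>2 = 0"
    by (simp add: sum_nonneg_eq_0_iff)
  then have "P j *v d = 0" using W by (simp add: unitary_mat_norm_preserving)
  then show ?thesis by (simp add: d_def matrix_vector_mult_diff_distrib)
qed

lemma hobj_le_perturbed:
  assumes W: "\<forall>k. unitary_mat (W k)"
    and xmin: "\<forall>z. norm z \<le> C \<longrightarrow> fit W B \<Gamma> x \<le> fit W B \<Gamma> z" and "norm x \<le> C"
    and thr: "\<forall>j. is_hard_thr \<eta> (W (\<Gamma> j) *v (P j *v x)) (B j)"
    and dB: "\<forall>j i. norm (dB j $ i) < \<eta> / 2"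
  shows "hobj A y P \<nu> \<eta> C W B \<Gamma> x \<le> hobj A y P \<nu> \<eta> C W (\<lambda>j. B j + dB j) \<Gamma> (x + dx)"
proof (cases "norm (x + dx) \<le> C")
  case False
  then show ?thesis unfolding hobj_eq_objective by simp
next
  case True
  define w z where "w j = W (\<Gamma> j) *v (P j *v (x + dx))" and "z j = W (\<Gamma> j) *v (P j *v x)" for j
  have "fit W B \<Gamma> x + fit_curv W \<Gamma> dx \<le> fit W B \<Gamma> (x + dx)"
    using fit_along_line[of W B \<Gamma> x 1 dx] fit_deriv_nonneg_at_ball_minimizer[OF xmin \<open>norm x \<le> C\<close> True]
    by simp
  moreover have "(\<Sum>j\<in>UNIV. (norm (w j - z j))\<^sup>2) \<le> fit_curv W \<Gamma> dx"
    unfolding fit_curv_def w_def z_def using nu_nonneg by (simp add: matrix_vector_right_distrib)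
  moreover have "(\<Sum>j\<in>UNIV. \<eta>\<^sup>2 * real (l0 (B j)))
      \<le> (\<Sum>j\<in>UNIV. (norm (w j - z j))\<^sup>2 - (norm (w j - B j))\<^sup>2 + (norm (w j - B j - dB j))\<^sup>2
                    + \<eta>\<^sup>2 * real (l0 (B j + dB j)))"
    using perturbed_patch_cost thr dB unfolding z_def by (intro sum_mono) blast
  ultimately have "objective W B \<Gamma> x \<le> objective W (\<lambda>j. B j + dB j) \<Gamma> (x + dx)"
    unfolding objective_def fit_def w_def[symmetric] sum.distrib sum_subtractf
    by (simp add: diff_diff_eq)
  then show ?thesis unfolding hobj_eq_objective using W \<open>norm x \<le> C\<close> True by simp
qed

lemma fit_tendsto:
  assumes "\<forall>k. ((\<lambda>t. W t k) \<longlongrightarrow> W0 k) F" "\<forall>j. ((\<lambda>t. B t j) \<longlongrightarrow> B0 j) F" "(x \<longlongrightarrow> x0) F"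
  shows "((\<lambda>t. fit (W t) (B t) \<Gamma> (x t)) \<longlongrightarrow> fit W0 B0 \<Gamma> x0) F"
  unfolding fit_def using assms by (intro tendsto_intros tendsto_matrix_vector_mult) auto

lemma patch_cost_tendsto:
  assumes "(V \<longlongrightarrow> V0) F" "(b \<longlongrightarrow> b0) F" "(x \<longlongrightarrow> x0) F" "\<forall>\<^sub>F t in F. l0 (b t) = l0 b0"
  shows "((\<lambda>t. patch_cost (V t) (b t) (x t) j) \<longlongrightarrow> patch_cost V0 b0 x0 j) F"
proof -
  have "((\<lambda>t. real (l0 (b t))) \<longlongrightarrow> real (l0 b0)) F"
    using assms(4) by (simp add: tendsto_eventually)
  then show ?thesis
    unfolding patch_cost_def using assms by (intro tendsto_intros tendsto_matrix_vector_mult) auto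
qed

lemma objective_tendsto:
  assumes W: "\<forall>k. ((\<lambda>t. W t k) \<longlongrightarrow> W0 k) F" and B: "\<forall>j. ((\<lambda>t. B t j) \<longlongrightarrow> B0 j) F"
    and x: "(x \<longlongrightarrow> x0) F"
    and gap: "\<forall>\<^sub>F t in F. \<forall>j i. B t j $ i = 0 \<or> \<eta> \<le> norm (B t j $ i)"
  shows "((\<lambda>t. objective (W t) (B t) \<Gamma> (x t)) \<longlongrightarrow> objective W0 B0 \<Gamma> x0) F"
proof -
  have "\<forall>\<^sub>F t in F. l0 (B t j) = l0 (B0 j)" for j
    by (rule l0_eventually_eq_limit[OF B[rule_format] eventually_mono[OF gap] eta_pos]) blast
  then have "((\<lambda>t. patch_cost (W t (\<Gamma> j)) (B t j) (x t) j) \<longlongrightarrow> patch_cost (W0 (\<Gamma> j)) (B0 j) x0 j) F"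
    for j using W B x by (intro patch_cost_tendsto) auto
  then show ?thesis
    unfolding objective_eq_patch_costs using x by (intro tendsto_intros tendsto_matrix_vector_mult) auto
qed

end

section \<open>Iterates of Algorithm A2\<close>

locale A2_run = transform_learning A y P \<nu> \<eta> C
  for A :: "complex^'p^'m" and y :: "complex^'m" and P :: "'j::finite \<Rightarrow> complex^'p^'n"
    and \<nu> \<eta> C :: real +
  fixes Wt :: "nat \<Rightarrow> 'k::{finite,linorder} \<Rightarrow> complex^'n^'n" and Bt :: "nat \<Rightarrow> 'j \<Rightarrow> complex^'n"
    and \<Gamma>t :: "nat \<Rightarrow> 'j \<Rightarrow> 'k" and xt :: "nat \<Rightarrow> complex^'p"
  assumes iterates: "A2_iterates A y P \<nu> \<eta> C Wt Bt \<Gamma>t xt"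
begin

lemma A2_step_from: "A2_step A y P \<nu> \<eta> C (Bt t) (\<Gamma>t t) (xt t) (Wt (Suc t)) (Bt (Suc t)) (\<Gamma>t (Suc t)) (xt (Suc t))"
  using iterates unfolding A2_iterates_def by blast

lemma A2_step_to:
  "0 < t \<Longrightarrow> A2_step A y P \<nu> \<eta> C (Bt (t - 1)) (\<Gamma>t (t - 1)) (xt (t - 1)) (Wt t) (Bt t) (\<Gamma>t t) (xt t)"
  using A2_step_from[of "t - 1"] by simp

lemma transform_update:
  "\<forall>k. \<exists>U S V. is_full_svd (\<Sum>j\<in>{j. \<Gamma>t t j = k}. outer (P j *v xt t) (Bt t j)) U S V
              \<and> Wt (Suc t) k = V ** cadj U"
  using A2_step_from[of t] unfolding A2_step_def by blast

lemma transform_update_minimal: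
  "\<forall>k. unitary_mat (W' k) \<Longrightarrow> fit (Wt (Suc t)) (Bt t) (\<Gamma>t t) (xt t) \<le> fit W' (Bt t) (\<Gamma>t t) (xt t)"
  using svd_transform_update_optimal(2)[OF transform_update] unfolding fit_def by simp

lemma iterate_unitary: "0 < t \<Longrightarrow> unitary_mat (Wt t k)"
  using svd_transform_update_optimal(1)[OF transform_update[of "t - 1"], of "\<lambda>_. mat 1"] unitary_mat_1
  by simp blast

lemma iterate_sparse_code: "0 < t \<Longrightarrow> Bt t j = hard_thr \<eta> (Wt t (\<Gamma>t t j) *v (P j *v xt (t - 1)))"
  using A2_step_to unfolding A2_step_def by blast

lemma iterate_sparse_code_gap: "0 < t \<Longrightarrow> Bt t j $ i = 0 \<or> \<eta> \<le> norm (Bt t j $ i)"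
  using iterate_sparse_code hard_thr_nth by metis

lemma iterate_coding_minimal:
  assumes "0 < t"
  shows "patch_cost (Wt t (\<Gamma>t t j)) (Bt t j) (xt (t - 1)) j \<le> patch_cost (Wt t k) b (xt (t - 1)) j"
proof -
  have "patch_cost (Wt t (\<Gamma>t t j)) (Bt t j) (xt (t - 1)) j = sc_cost \<eta> (Wt t (\<Gamma>t t j)) (P j *v xt (t - 1))"
    using iterate_sparse_code[OF assms] by (simp add: patch_cost_def sc_cost_def)
  also have "\<dots> \<le> sc_cost \<eta> (Wt t k) (P j *v xt (t - 1))"
    using A2_step_to[OF assms] unfolding A2_step_def by blast
  also have "\<dots> \<le> patch_cost (Wt t k) b (xt (t - 1)) j"
    using patch_cost_sparse_coding_minimal by (simp add: patch_cost_def sc_cost_def)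
  finally show ?thesis .
qed

lemma iterate_in_ball: "0 < t \<Longrightarrow> norm (xt t) \<le> C"
  using A2_step_to unfolding A2_step_def by blast

lemma iterate_image_minimal:
  "0 < t \<Longrightarrow> norm z \<le> C \<Longrightarrow> fit (Wt t) (Bt t) (\<Gamma>t t) (xt t) \<le> fit (Wt t) (Bt t) (\<Gamma>t t) z"
  using A2_step_to unfolding A2_step_def fit_def by blast

definition objective_at :: "nat \<Rightarrow> real" where
  "objective_at t = objective (Wt t) (Bt t) (\<Gamma>t t) (xt t)"

definition objective_after_transform :: "nat \<Rightarrow> real" where
  "objective_after_transform t = objective (Wt (Suc t)) (Bt t) (\<Gamma>t t) (xt t)"

definition objective_before_image :: "nat \<Rightarrow> real" where
  "objective_before_image t = objective (Wt t) (Bt t) (\<Gamma>t t) (xt (t - 1))"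

lemma objective_descent:
  assumes "0 < t"
  shows "objective_at (Suc t) \<le> objective_before_image (Suc t)"
    and "objective_before_image (Suc t) \<le> objective_after_transform t"
    and "objective_after_transform t \<le> objective_at t"
proof -
  show "objective_at (Suc t) \<le> objective_before_image (Suc t)"
    using iterate_image_minimal[of "Suc t" "xt t"] iterate_in_ball[OF assms]
    by (simp add: objective_at_def objective_before_image_def objective_def)
  show "objective_before_image (Suc t) \<le> objective_after_transform t"
    using iterate_coding_minimal[of "Suc t"]
    by (simp add: objective_before_image_def objective_after_transform_def objective_eq_patch_costs sum_mono)
  show "objective_after_transform t \<le> objective_at t"
    using transform_update_minimal[of "Wt t" t] iterate_unitary[OF assms]
    by (simp add: objective_after_transform_def objective_at_def objective_def)
qed

definition objective_limit :: real where
  "objective_limit = lim objective_at"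

lemma objective_at_tendsto: "objective_at \<longlonglongrightarrow> objective_limit"
proof -
  have "decseq (\<lambda>t. objective_at (Suc t))"
    using objective_descent by (intro decseq_SucI) (meson order_trans zero_less_Suc)
  moreover have "\<forall>t. 0 \<le> objective_at (Suc t)"
    by (simp add: objective_at_def objective_nonneg)
  ultimately obtain L where "(\<lambda>t. objective_at (Suc t)) \<longlonglongrightarrow> L"
    by (rule decseq_convergent)
  then have "objective_at \<longlonglongrightarrow> L" by (rule LIMSEQ_imp_Suc)
  then show ?thesis by (simp add: objective_limit_def limI)
qed

lemma objective_descent_eventually:
  "\<forall>\<^sub>F t in sequentially. objective_at (Suc t) \<le> objective_before_image (Suc t)
     \<and> objective_before_image (Suc t) \<le> objective_after_transform t
     \<and> objective_after_transform t \<le> objective_at t"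
proof (rule eventually_sequentiallyI[of 1])
  fix t :: nat
  assume "1 \<le> t"
  then show "objective_at (Suc t) \<le> objective_before_image (Suc t)
     \<and> objective_before_image (Suc t) \<le> objective_after_transform t
     \<and> objective_after_transform t \<le> objective_at t"
    using objective_descent[of t] by simp
qed

lemma objective_after_transform_tendsto: "objective_after_transform \<longlonglongrightarrow> objective_limit"
proof (rule tendsto_sandwich)
  show "\<forall>\<^sub>F t in sequentially. objective_at (Suc t) \<le> objective_after_transform t"
    "\<forall>\<^sub>F t in sequentially. objective_after_transform t \<le> objective_at t"
    using objective_descent_eventually by (auto elim: eventually_mono)
qed (use objective_at_tendsto LIMSEQ_Suc in auto)

lemma objective_before_image_tendsto: "objective_before_image \<longlonglongrightarrow> objective_limit"
proof -
  have "(\<lambda>t. objective_before_image (Suc t)) \<longlonglongrightarrow> objective_limit"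
  proof (rule tendsto_sandwich)
    show "\<forall>\<^sub>F t in sequentially. objective_at (Suc t) \<le> objective_before_image (Suc t)"
      "\<forall>\<^sub>F t in sequentially. objective_before_image (Suc t) \<le> objective_at t"
      using objective_descent_eventually by (auto elim: eventually_mono)
  qed (use objective_at_tendsto LIMSEQ_Suc in auto)
  then show ?thesis by (rule LIMSEQ_imp_Suc)
qed

lemma iterates_eventually_bounded:
  obtains c where "\<forall>\<^sub>F t in sequentially. (\<forall>k. norm (Wt t k) \<le> sqrt CARD('n))
     \<and> (\<forall>j. norm (Bt t j) \<le> c j) \<and> norm (xt t) \<le> C"
proof -
  have "\<forall>j. \<exists>K\<ge>0. \<forall>v. norm (P j *v v) \<le> norm v * K"
    using bounded_linear.nonneg_bounded[OF matrix_vector_mul_bounded_linear] by blast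
  then obtain K where K: "\<And>j v. norm (P j *v v) \<le> norm v * K j" "\<And>j. 0 \<le> K j"
    by metis
  have "(\<forall>k. norm (Wt t k) \<le> sqrt CARD('n)) \<and> (\<forall>j. norm (Bt t j) \<le> C * K j) \<and> norm (xt t) \<le> C"
    if "2 \<le> t" for t
  proof (intro conjI allI)
    show "norm (Wt t k) \<le> sqrt CARD('n)" for k
      using iterate_unitary[of t] that by (simp add: unitary_mat_norm)
    show "norm (xt t) \<le> C" using iterate_in_ball[of t] that by simp
    fix j
    have "norm (Bt t j) \<le> norm (Wt t (\<Gamma>t t j) *v (P j *v xt (t - 1)))"
      using iterate_sparse_code[of t j] that norm_hard_thr_le by simp
    also have "\<dots> = norm (P j *v xt (t - 1))"
      using iterate_unitary[of t] that by (simp add: unitary_mat_norm_preserving)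
    also have "\<dots> \<le> norm (xt (t - 1)) * K j" by (rule K(1))
    also have "\<dots> \<le> C * K j"
      using iterate_in_ball[of "t - 1"] that K(2) by (intro mult_right_mono) simp_all
    finally show "norm (Bt t j) \<le> C * K j" .
  qed
  then show ?thesis by (intro that[of "\<lambda>j. C * K j"] eventually_sequentiallyI[of 2]) blast
qed

definition converges_along ::
  "(nat \<Rightarrow> nat) \<Rightarrow> ('k \<Rightarrow> complex^'n^'n) \<Rightarrow> ('j \<Rightarrow> complex^'n) \<Rightarrow> ('j \<Rightarrow> 'k) \<Rightarrow> complex^'p \<Rightarrow> bool"
  where "converges_along r W B \<Gamma> x \<longleftrightarrow> strict_mono r
    \<and> (\<forall>k. (\<lambda>i. Wt (r i) k) \<longlonglongrightarrow> W k) \<and> (\<forall>j. (\<lambda>i. Bt (r i) j) \<longlonglongrightarrow> B j)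
    \<and> (\<forall>i. \<Gamma>t (r i) = \<Gamma>) \<and> (\<lambda>i. xt (r i)) \<longlonglongrightarrow> x"

lemma converges_along_subseq:
  assumes "converges_along r W B \<Gamma> x" and q: "strict_mono q"
  shows "converges_along (r \<circ> q) W B \<Gamma> x"
proof -
  have r: "strict_mono r" "\<forall>k. (\<lambda>i. Wt (r i) k) \<longlonglongrightarrow> W k" "\<forall>j. (\<lambda>i. Bt (r i) j) \<longlonglongrightarrow> B j"
    "\<forall>i. \<Gamma>t (r i) = \<Gamma>" "(\<lambda>i. xt (r i)) \<longlonglongrightarrow> x"
    using assms(1) unfolding converges_along_def by auto
  have "(\<lambda>i. Wt (r (q i)) k) \<longlonglongrightarrow> W k" for k
    using LIMSEQ_subseq_LIMSEQ[OF r(2)[rule_format, of k] q] by (simp add: o_def)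
  moreover have "(\<lambda>i. Bt (r (q i)) j) \<longlonglongrightarrow> B j" for j
    using LIMSEQ_subseq_LIMSEQ[OF r(3)[rule_format, of j] q] by (simp add: o_def)
  moreover have "(\<lambda>i. xt (r (q i))) \<longlonglongrightarrow> x"
    using LIMSEQ_subseq_LIMSEQ[OF r(5) q] by (simp add: o_def)
  ultimately show ?thesis
    using strict_mono_o[OF r(1) q] r(4) unfolding converges_along_def by simp
qed

lemma is_accum_point_iff_converges_along:
  "is_accum_point Wt Bt \<Gamma>t xt W B \<Gamma> x \<longleftrightarrow> (\<exists>r. converges_along r W B \<Gamma> x)"
proof
  assume "is_accum_point Wt Bt \<Gamma>t xt W B \<Gamma> x"
  then obtain r N where r: "strict_mono r" "\<forall>k. (\<lambda>i. Wt (r i) k) \<longlonglongrightarrow> W k"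
    "\<forall>j. (\<lambda>i. Bt (r i) j) \<longlonglongrightarrow> B j" "\<forall>i\<ge>N. \<Gamma>t (r i) = \<Gamma>" "(\<lambda>i. xt (r i)) \<longlonglongrightarrow> x"
    unfolding is_accum_point_def eventually_sequentially by blast
  have "strict_mono (\<lambda>i. r (i + N))"
    using r(1) by (simp add: strict_mono_def)
  moreover have "(\<lambda>i. Wt (r (i + N)) k) \<longlonglongrightarrow> W k" "(\<lambda>i. Bt (r (i + N)) j) \<longlonglongrightarrow> B j" for k j
    using r(2,3) LIMSEQ_ignore_initial_segment by blast+
  moreover have "(\<lambda>i. xt (r (i + N))) \<longlonglongrightarrow> x"
    using r(5) by (rule LIMSEQ_ignore_initial_segment)
  ultimately have "converges_along (\<lambda>i. r (i + N)) W B \<Gamma> x"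
    using r(4) unfolding converges_along_def by simp
  then show "\<exists>r. converges_along r W B \<Gamma> x" by blast
next
  assume "\<exists>r. converges_along r W B \<Gamma> x"
  then show "is_accum_point Wt Bt \<Gamma>t xt W B \<Gamma> x"
    unfolding is_accum_point_def converges_along_def by (blast intro: always_eventually)
qed

lemma convergent_subseq_along:
  fixes s :: "nat \<Rightarrow> nat"
  assumes s: "strict_mono s"
  obtains q :: "nat \<Rightarrow> nat" and W B \<Gamma> x where "strict_mono q" "converges_along (s \<circ> q) W B \<Gamma> x"
proof -
  obtain c where bounded: "\<forall>\<^sub>F t in sequentially. (\<forall>k. norm (Wt t k) \<le> sqrt CARD('n))
     \<and> (\<forall>j. norm (Bt t j) \<le> c j) \<and> norm (xt t) \<le> C"
    by (rule iterates_eventually_bounded)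
  have along: "\<forall>\<^sub>F i in sequentially. (\<forall>k. norm (Wt (s (q i)) k) \<le> sqrt CARD('n))
     \<and> (\<forall>j. norm (Bt (s (q i)) j) \<le> c j) \<and> norm (xt (s (q i))) \<le> C" if "strict_mono q" for q
    using eventually_subseq[OF strict_mono_o[OF s that] bounded] by (simp add: o_def)
  obtain q1 :: "nat \<Rightarrow> nat" and \<Gamma> where q1: "strict_mono q1" "\<forall>i. \<Gamma>t (s (q1 i)) = \<Gamma>"
    by (rule finite_range_constant_subseq[of "\<lambda>i. \<Gamma>t (s i)"])
  have "\<forall>\<^sub>F i in sequentially. \<forall>k. norm (Wt (s (q1 i)) k) \<le> sqrt CARD('n)"
    using along[OF q1(1)] by eventually_elim simp
  then obtain q2 :: "nat \<Rightarrow> nat" and W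
    where q2: "strict_mono q2" "\<forall>k. (\<lambda>i. Wt (s (q1 (q2 i))) k) \<longlonglongrightarrow> W k"
    by (rule bounded_fun_seq_convergent_subseq)
  define q12 where "q12 = q1 \<circ> q2"
  have q12: "strict_mono q12" unfolding q12_def using q1(1) q2(1) by (rule strict_mono_o)
  have "\<forall>\<^sub>F i in sequentially. \<forall>j. norm (Bt (s (q12 i)) j) \<le> c j"
    using along[OF q12] by eventually_elim simp
  then obtain q3 :: "nat \<Rightarrow> nat" and B
    where q3: "strict_mono q3" "\<forall>j. (\<lambda>i. Bt (s (q12 (q3 i))) j) \<longlonglongrightarrow> B j"
    by (rule bounded_fun_seq_convergent_subseq)
  define q123 where "q123 = q12 \<circ> q3"
  have q123: "strict_mono q123" unfolding q123_def using q12 q3(1) by (rule strict_mono_o)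
  have "\<forall>\<^sub>F i in sequentially. norm (xt (s (q123 i))) \<le> C"
    using along[OF q123] by eventually_elim simp
  then obtain q4 :: "nat \<Rightarrow> nat" and x where q4: "strict_mono q4" "(\<lambda>i. xt (s (q123 (q4 i)))) \<longlonglongrightarrow> x"
    by (rule bounded_seq_convergent_subseq)
  have "converges_along (s \<circ> q123 \<circ> q4) W B \<Gamma> x"
    unfolding converges_along_def
  proof (intro conjI allI)
    show "strict_mono (s \<circ> q123 \<circ> q4)" using s q123 q4(1) by (intro strict_mono_o)
    show "(\<lambda>i. Wt ((s \<circ> q123 \<circ> q4) i) k) \<longlonglongrightarrow> W k" for k
      using LIMSEQ_subseq_LIMSEQ[OF q2(2)[rule_format, of k] strict_mono_o[OF q3(1) q4(1)]]
      by (simp add: q123_def q12_def o_def)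
    show "(\<lambda>i. Bt ((s \<circ> q123 \<circ> q4) i) j) \<longlonglongrightarrow> B j" for j
      using LIMSEQ_subseq_LIMSEQ[OF q3(2)[rule_format, of j] q4(1)] by (simp add: q123_def o_def)
    show "\<Gamma>t ((s \<circ> q123 \<circ> q4) i) = \<Gamma>" for i
      using q1(2) by (simp add: q123_def q12_def)
    show "(\<lambda>i. xt ((s \<circ> q123 \<circ> q4) i)) \<longlonglongrightarrow> x"
      using q4(2) by (simp add: o_def)
  qed
  then show ?thesis
    using that[OF strict_mono_o[OF q123 q4(1)]] by (simp add: o_assoc)
qed

lemma converges_alongD:
  assumes "converges_along r W B \<Gamma> x"
  shows "strict_mono r" "\<forall>k. (\<lambda>i. Wt (r i) k) \<longlonglongrightarrow> W k" "\<forall>j. (\<lambda>i. Bt (r i) j) \<longlonglongrightarrow> B j"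
    "\<And>i. \<Gamma>t (r i) = \<Gamma>" "(\<lambda>i. xt (r i)) \<longlonglongrightarrow> x"
  using assms unfolding converges_along_def by auto

lemma converges_along_eventually:
  assumes "converges_along r W B \<Gamma> x" "\<forall>\<^sub>F t in sequentially. Q t"
  shows "\<forall>\<^sub>F i in sequentially. Q (r i)"
  using eventually_subseq[OF converges_alongD(1)[OF assms(1)] assms(2)] .

lemma converges_along_limit_unitary_in_ball:
  assumes "converges_along r W B \<Gamma> x"
  shows "\<forall>k. unitary_mat (W k)" and "norm x \<le> C"
proof -
  have ev: "\<forall>\<^sub>F i in sequentially. 0 < r i"
    using converges_along_eventually[OF assms eventually_gt_at_top] .
  show "\<forall>k. unitary_mat (W k)"
  proof
    fix k
    have "\<forall>\<^sub>F i in sequentially. unitary_mat (Wt (r i) k)"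
      using ev by eventually_elim (rule iterate_unitary)
    then show "unitary_mat (W k)"
      by (rule unitary_mat_limit[OF converges_alongD(2)[OF assms, rule_format] _ trivial_limit_sequentially])
  qed
  have "\<forall>\<^sub>F i in sequentially. norm (xt (r i)) \<le> C"
    using ev by eventually_elim (rule iterate_in_ball)
  then show "norm x \<le> C"
    by (rule tendsto_upperbound[OF tendsto_norm[OF converges_alongD(5)[OF assms]] _ trivial_limit_sequentially])
qed

lemma converges_along_gap:
  assumes "converges_along r W B \<Gamma> x"
  shows "\<forall>\<^sub>F i in sequentially. \<forall>j l. Bt (r i) j $ l = 0 \<or> \<eta> \<le> norm (Bt (r i) j $ l)"
  using converges_along_eventually[OF assms eventually_gt_at_top[of 0]]
  by eventually_elim (use iterate_sparse_code_gap in blast)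

lemma converges_along_limit_objective:
  assumes r: "converges_along r W B \<Gamma> x"
  shows "objective W B \<Gamma> x = objective_limit"
proof -
  have "(\<lambda>i. objective_at (r i)) \<longlonglongrightarrow> objective W B \<Gamma> x"
    unfolding objective_at_def converges_alongD(4)[OF r]
    by (rule objective_tendsto[OF converges_alongD(2,3,5)[OF r] converges_along_gap[OF r]])
  moreover have "(\<lambda>i. objective_at (r i)) \<longlonglongrightarrow> objective_limit"
    using LIMSEQ_subseq_LIMSEQ[OF objective_at_tendsto converges_alongD(1)[OF r]] by (simp add: o_def)
  ultimately show ?thesis by (rule LIMSEQ_unique)
qed

lemma converges_along_limit_image_minimal:
  assumes r: "converges_along r W B \<Gamma> x" and "norm z \<le> C"
  shows "fit W B \<Gamma> x \<le> fit W B \<Gamma> z"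
proof (rule tendsto_le[OF trivial_limit_sequentially])
  show "(\<lambda>i. fit (Wt (r i)) (Bt (r i)) \<Gamma> (xt (r i))) \<longlonglongrightarrow> fit W B \<Gamma> x"
    "(\<lambda>i. fit (Wt (r i)) (Bt (r i)) \<Gamma> z) \<longlonglongrightarrow> fit W B \<Gamma> z"
    by (rule fit_tendsto[OF converges_alongD(2,3,5)[OF r]], rule fit_tendsto[OF converges_alongD(2,3)[OF r]]) simp
  show "\<forall>\<^sub>F i in sequentially. fit (Wt (r i)) (Bt (r i)) \<Gamma> (xt (r i)) \<le> fit (Wt (r i)) (Bt (r i)) \<Gamma> z"
    using converges_along_eventually[OF r eventually_gt_at_top[of 0]]
  proof eventually_elim
    case (elim i)
    show ?case
      using iterate_image_minimal[OF elim \<open>norm z \<le> C\<close>] by (simp add: converges_alongD(4)[OF r])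
  qed
qed

text \<open>Along a further subsequence the updated transforms converge to some W2; the values
  after the transform update still tend to the common limit, so W2 fits as well as W,
  and W2 inherits optimality from the SVD step.\<close>
lemma converges_along_limit_transform_minimal:
  assumes r: "converges_along r W B \<Gamma> x" and W': "\<forall>k. unitary_mat (W' k)"
  shows "fit W B \<Gamma> x \<le> fit W' B \<Gamma> x"
proof -
  obtain c where "\<forall>\<^sub>F t in sequentially. (\<forall>k. norm (Wt t k) \<le> sqrt CARD('n))
     \<and> (\<forall>j. norm (Bt t j) \<le> c j) \<and> norm (xt t) \<le> C"
    by (rule iterates_eventually_bounded)
  then have "\<forall>\<^sub>F t in sequentially. \<forall>k. norm (Wt (Suc t) k) \<le> sqrt CARD('n)"
    by (subst eventually_sequentially_Suc) (auto elim: eventually_mono)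
  then have "\<forall>\<^sub>F i in sequentially. \<forall>k. norm (Wt (Suc (r i)) k) \<le> sqrt CARD('n)"
    by (rule converges_along_eventually[OF r])
  then obtain q :: "nat \<Rightarrow> nat" and W2
    where q: "strict_mono q" and W2: "\<forall>k. (\<lambda>i. Wt (Suc (r (q i))) k) \<longlonglongrightarrow> W2 k"
    by (rule bounded_fun_seq_convergent_subseq)
  define \<rho> where "\<rho> = r \<circ> q"
  have \<rho>: "converges_along \<rho> W B \<Gamma> x"
    unfolding \<rho>_def using r q by (rule converges_along_subseq)
  have W2\<rho>: "\<forall>k. (\<lambda>i. Wt (Suc (\<rho> i)) k) \<longlonglongrightarrow> W2 k"
    using W2 by (simp add: \<rho>_def)
  have "(\<lambda>i. objective_after_transform (\<rho> i)) \<longlonglongrightarrow> objective W2 B \<Gamma> x"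
    unfolding objective_after_transform_def converges_alongD(4)[OF \<rho>]
    by (rule objective_tendsto[OF W2\<rho> converges_alongD(3,5)[OF \<rho>] converges_along_gap[OF \<rho>]])
  moreover have "(\<lambda>i. objective_after_transform (\<rho> i)) \<longlonglongrightarrow> objective W B \<Gamma> x"
    using LIMSEQ_subseq_LIMSEQ[OF objective_after_transform_tendsto converges_alongD(1)[OF \<rho>]]
    by (simp add: o_def converges_along_limit_objective[OF \<rho>])
  ultimately have "objective W2 B \<Gamma> x = objective W B \<Gamma> x"
    by (rule LIMSEQ_unique)
  then have "fit W2 B \<Gamma> x = fit W B \<Gamma> x"
    by (simp add: objective_def)
  moreover have "fit W2 B \<Gamma> x \<le> fit W' B \<Gamma> x"
  proof (rule LIMSEQ_le)
    show "(\<lambda>i. fit (Wt (Suc (\<rho> i))) (Bt (\<rho> i)) \<Gamma> (xt (\<rho> i))) \<longlonglongrightarrow> fit W2 B \<Gamma> x"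
      by (rule fit_tendsto[OF W2\<rho> converges_alongD(3,5)[OF \<rho>]])
    show "(\<lambda>i. fit W' (Bt (\<rho> i)) \<Gamma> (xt (\<rho> i))) \<longlonglongrightarrow> fit W' B \<Gamma> x"
      by (rule fit_tendsto[OF _ converges_alongD(3,5)[OF \<rho>]]) simp
    have "fit (Wt (Suc (\<rho> i))) (Bt (\<rho> i)) \<Gamma> (xt (\<rho> i)) \<le> fit W' (Bt (\<rho> i)) \<Gamma> (xt (\<rho> i))" for i
      using transform_update_minimal[OF W', of "\<rho> i"] unfolding converges_alongD(4)[OF \<rho>] .
    then show "\<exists>N. \<forall>i\<ge>N. fit (Wt (Suc (\<rho> i))) (Bt (\<rho> i)) \<Gamma> (xt (\<rho> i))
        \<le> fit W' (Bt (\<rho> i)) \<Gamma> (xt (\<rho> i))"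
      by blast
  qed
  ultimately show ?thesis by simp
qed

text \<open>The image iterate preceding the subsequence converges (along a further subsequence)
  to some x'. The values before the image update tend to the common limit as well, so x'
  and x are both minimizers of the convex image subproblem, and hence agree on patches.\<close>
lemma converges_along_previous_image:
  assumes r: "converges_along r W B \<Gamma> x"
  obtains \<rho> x' where "converges_along \<rho> W B \<Gamma> x" "(\<lambda>i. xt (\<rho> i - 1)) \<longlonglongrightarrow> x'"
    "\<forall>\<^sub>F i in sequentially. 0 < \<rho> i" "\<forall>j. P j *v x' = P j *v x"
proof -
  have bounded: "\<forall>\<^sub>F t in sequentially. 0 < t \<and> norm (xt (t - 1)) \<le> C"
    by (rule eventually_sequentiallyI[of 2]) (simp add: iterate_in_ball)
  then have "\<forall>\<^sub>F i in sequentially. norm (xt (r i - 1)) \<le> C"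
    by (rule eventually_mono[OF converges_along_eventually[OF r]]) simp
  then obtain q :: "nat \<Rightarrow> nat" and x' where q: "strict_mono q" and x': "(\<lambda>i. xt (r (q i) - 1)) \<longlonglongrightarrow> x'"
    by (rule bounded_seq_convergent_subseq)
  define \<rho> where "\<rho> = r \<circ> q"
  have \<rho>: "converges_along \<rho> W B \<Gamma> x"
    unfolding \<rho>_def using r q by (rule converges_along_subseq)
  have x'\<rho>: "(\<lambda>i. xt (\<rho> i - 1)) \<longlonglongrightarrow> x'"
    using x' by (simp add: \<rho>_def)
  have ev: "\<forall>\<^sub>F i in sequentially. 0 < \<rho> i \<and> norm (xt (\<rho> i - 1)) \<le> C"
    using converges_along_eventually[OF \<rho> bounded] .
  have "norm x' \<le> C"
    using ev by (intro tendsto_upperbound[OF tendsto_norm[OF x'\<rho>] _ trivial_limit_sequentially])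
      (auto elim: eventually_mono)
  have "(\<lambda>i. objective_before_image (\<rho> i)) \<longlonglongrightarrow> objective W B \<Gamma> x'"
    unfolding objective_before_image_def converges_alongD(4)[OF \<rho>]
    by (rule objective_tendsto[OF converges_alongD(2,3)[OF \<rho>] x'\<rho> converges_along_gap[OF \<rho>]])
  moreover have "(\<lambda>i. objective_before_image (\<rho> i)) \<longlonglongrightarrow> objective W B \<Gamma> x"
    using LIMSEQ_subseq_LIMSEQ[OF objective_before_image_tendsto converges_alongD(1)[OF \<rho>]]
    by (simp add: o_def converges_along_limit_objective[OF \<rho>])
  ultimately have "objective W B \<Gamma> x' = objective W B \<Gamma> x"
    by (rule LIMSEQ_unique)
  then have "fit W B \<Gamma> x' = fit W B \<Gamma> x"
    by (simp add: objective_def)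
  then have "\<forall>j. P j *v x' = P j *v x"
    using fit_ball_minimizers_agree_on_patches converges_along_limit_unitary_in_ball[OF r]
      converges_along_limit_image_minimal[OF r] \<open>norm x' \<le> C\<close> by blast
  with \<rho> x'\<rho> ev show ?thesis
    by (intro that) (auto elim: eventually_mono)
qed

lemma converges_along_limit_coding_minimal:
  assumes r: "converges_along r W B \<Gamma> x"
  shows "objective W B \<Gamma> x \<le> objective W B' \<Gamma>' x"
proof -
  obtain \<rho> x' where \<rho>: "converges_along \<rho> W B \<Gamma> x" and x': "(\<lambda>i. xt (\<rho> i - 1)) \<longlonglongrightarrow> x'"
    and pos: "\<forall>\<^sub>F i in sequentially. 0 < \<rho> i" and patches: "\<forall>j. P j *v x' = P j *v x"
    by (rule converges_along_previous_image[OF r])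
  have "patch_cost (W (\<Gamma> j)) (B j) x' j \<le> patch_cost (W (\<Gamma>' j)) (B' j) x' j" for j
  proof (rule tendsto_le[OF trivial_limit_sequentially])
    have "\<forall>\<^sub>F i in sequentially. l0 (Bt (\<rho> i) j) = l0 (B j)"
      by (rule l0_eventually_eq_limit[OF converges_alongD(3)[OF \<rho>, rule_format]
          eventually_mono[OF converges_along_gap[OF \<rho>]] eta_pos]) blast
    then show "(\<lambda>i. patch_cost (Wt (\<rho> i) (\<Gamma> j)) (Bt (\<rho> i) j) (xt (\<rho> i - 1)) j)
        \<longlonglongrightarrow> patch_cost (W (\<Gamma> j)) (B j) x' j"
      by (intro patch_cost_tendsto converges_alongD(2,3)[OF \<rho>, rule_format] x')
    show "(\<lambda>i. patch_cost (Wt (\<rho> i) (\<Gamma>' j)) (B' j) (xt (\<rho> i - 1)) j)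
        \<longlonglongrightarrow> patch_cost (W (\<Gamma>' j)) (B' j) x' j"
      by (intro patch_cost_tendsto converges_alongD(2)[OF \<rho>, rule_format] x' tendsto_const) simp
    show "\<forall>\<^sub>F i in sequentially. patch_cost (Wt (\<rho> i) (\<Gamma> j)) (Bt (\<rho> i) j) (xt (\<rho> i - 1)) j
        \<le> patch_cost (Wt (\<rho> i) (\<Gamma>' j)) (B' j) (xt (\<rho> i - 1)) j"
      using pos
    proof eventually_elim
      case (elim i)
      show ?case
        using iterate_coding_minimal[OF elim, of j "\<Gamma>' j" "B' j"] by (simp add: converges_alongD(4)[OF \<rho>])
    qed
  qed
  then have "patch_cost (W (\<Gamma> j)) (B j) x j \<le> patch_cost (W (\<Gamma>' j)) (B' j) x j" for j
    using patches by (simp add: patch_cost_def)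
  then show ?thesis
    unfolding objective_eq_patch_costs by (simp add: sum_mono)
qed

lemma converges_along_limit_is_hard_thr:
  assumes r: "converges_along r W B \<Gamma> x"
  shows "is_hard_thr \<eta> (W (\<Gamma> j) *v (P j *v x)) (B j)"
proof -
  obtain \<rho> x' where \<rho>: "converges_along \<rho> W B \<Gamma> x" and x': "(\<lambda>i. xt (\<rho> i - 1)) \<longlonglongrightarrow> x'"
    and pos: "\<forall>\<^sub>F i in sequentially. 0 < \<rho> i" and patches: "\<forall>j. P j *v x' = P j *v x"
    by (rule converges_along_previous_image[OF r])
  have "(\<lambda>i. Wt (\<rho> i) (\<Gamma> j) *v (P j *v xt (\<rho> i - 1))) \<longlonglongrightarrow> W (\<Gamma> j) *v (P j *v x')"
    by (intro tendsto_matrix_vector_mult converges_alongD(2)[OF \<rho>, rule_format] tendsto_const x')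
  moreover have "(\<lambda>i. hard_thr \<eta> (Wt (\<rho> i) (\<Gamma> j) *v (P j *v xt (\<rho> i - 1)))) \<longlonglongrightarrow> B j"
  proof -
    have "\<forall>\<^sub>F i in sequentially. Bt (\<rho> i) j = hard_thr \<eta> (Wt (\<rho> i) (\<Gamma> j) *v (P j *v xt (\<rho> i - 1)))"
      using pos by eventually_elim (simp add: iterate_sparse_code converges_alongD(4)[OF \<rho>])
    then show ?thesis
      using converges_alongD(3)[OF \<rho>] tendsto_cong by fastforce
  qed
  ultimately have "is_hard_thr \<eta> (W (\<Gamma> j) *v (P j *v x')) (B j)"
    using eta_pos by (intro hard_thr_limit[OF _ _ trivial_limit_sequentially]) simp_all
  then show ?thesis using patches by simp
qed

lemma accum_point_exists: "\<exists>W B \<Gamma> x. is_accum_point Wt Bt \<Gamma>t xt W B \<Gamma> x"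
proof -
  obtain q W B \<Gamma> x where "strict_mono q" "converges_along (id \<circ> q) W B \<Gamma> x"
    using convergent_subseq_along[OF strict_mono_id] .
  then show ?thesis unfolding is_accum_point_iff_converges_along by blast
qed

lemma accum_point_hobj:
  assumes "is_accum_point Wt Bt \<Gamma>t xt W B \<Gamma> x"
  shows "hobj A y P \<nu> \<eta> C W B \<Gamma> x = ereal objective_limit"
proof -
  obtain r where r: "converges_along r W B \<Gamma> x"
    using assms unfolding is_accum_point_iff_converges_along by blast
  show ?thesis
    unfolding hobj_eq_objective
    using converges_along_limit_unitary_in_ball[OF r] converges_along_limit_objective[OF r] by simp
qed

lemma iterates_approach_accum_points:
  assumes "\<epsilon> > 0"
  shows "\<exists>T. \<forall>t\<ge>T. \<exists>W B \<Gamma> x. is_accum_point Wt Bt \<Gamma>t xt W B \<Gamma> x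
                        \<and> iter_close \<epsilon> (Wt t) (Bt t) (\<Gamma>t t) (xt t) W B \<Gamma> x"
    (is "\<exists>T. \<forall>t\<ge>T. ?close t")
proof (rule ccontr)
  assume "\<not> (\<exists>T. \<forall>t\<ge>T. ?close t)"
  then have "\<not> eventually ?close sequentially"
    unfolding eventually_sequentially .
  then obtain s :: "nat \<Rightarrow> nat" where s: "strict_mono s" "\<forall>i. \<not> ?close (s i)"
    using not_eventually_sequentiallyD by blast
  obtain q W B \<Gamma> x where "strict_mono q" and sq: "converges_along (s \<circ> q) W B \<Gamma> x"
    using convergent_subseq_along[OF s(1)] .
  have "\<forall>\<^sub>F i in sequentially. iter_close \<epsilon> (Wt (s (q i))) (Bt (s (q i))) (\<Gamma>t (s (q i))) (xt (s (q i))) W B \<Gamma> x"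
  proof -
    have "\<forall>\<^sub>F i in sequentially. \<forall>k. dist (Wt (s (q i)) k) (W k) < \<epsilon>"
      using converges_alongD(2)[OF sq] assms by (intro eventually_all_finite) (simp add: tendstoD)
    moreover have "\<forall>\<^sub>F i in sequentially. \<forall>j. dist (Bt (s (q i)) j) (B j) < \<epsilon>"
      using converges_alongD(3)[OF sq] assms by (intro eventually_all_finite) (simp add: tendstoD)
    moreover have "\<forall>\<^sub>F i in sequentially. dist (xt (s (q i))) x < \<epsilon>"
      using tendstoD[OF converges_alongD(5)[OF sq] assms] by simp
    ultimately show ?thesis
      by eventually_elim (simp add: iter_close_def converges_alongD(4)[OF sq, unfolded o_def])
  qed
  then obtain i where "iter_close \<epsilon> (Wt (s (q i))) (Bt (s (q i))) (\<Gamma>t (s (q i))) (xt (s (q i))) W B \<Gamma> x"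
    unfolding eventually_sequentially by blast
  moreover have "is_accum_point Wt Bt \<Gamma>t xt W B \<Gamma> x"
    using sq unfolding is_accum_point_iff_converges_along by blast
  ultimately show False using s(2) by blast
qed

lemma accum_point_partial_minimizer:
  assumes "is_accum_point Wt Bt \<Gamma>t xt W B \<Gamma> x"
  defines "h \<equiv> hobj A y P \<nu> \<eta> C"
  shows "(\<forall>x'. h W B \<Gamma> x \<le> h W B \<Gamma> x')
      \<and> (\<forall>W'. h W B \<Gamma> x \<le> h W' B \<Gamma> x)
      \<and> (\<forall>B' \<Gamma>'. h W B \<Gamma> x \<le> h W B' \<Gamma>' x)
      \<and> (\<forall>dB dx. (\<forall>j i. norm (dB j $ i) < \<eta> / 2) \<longrightarrow>
                  h W B \<Gamma> x \<le> h W (\<lambda>j. B j + dB j) \<Gamma> (x + dx))"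
proof (intro conjI allI impI)
  obtain r where r: "converges_along r W B \<Gamma> x"
    using assms unfolding is_accum_point_iff_converges_along by blast
  note feasible = converges_along_limit_unitary_in_ball[OF r]
  note x_min = converges_along_limit_image_minimal[OF r]
  show "h W B \<Gamma> x \<le> h W B \<Gamma> x'" for x'
    unfolding h_def hobj_eq_objective using feasible x_min by (simp add: objective_def)
  show "h W B \<Gamma> x \<le> h W' B \<Gamma> x" for W'
    unfolding h_def hobj_eq_objective
    using feasible converges_along_limit_transform_minimal[OF r] by (simp add: objective_def)
  show "h W B \<Gamma> x \<le> h W B' \<Gamma>' x" for B' \<Gamma>'
    unfolding h_def hobj_eq_objective using feasible converges_along_limit_coding_minimal[OF r] by simp
  show "h W B \<Gamma> x \<le> h W (\<lambda>j. B j + dB j) \<Gamma> (x + dx)" if "\<forall>j i. norm (dB j $ i) < \<eta> / 2" for dB dx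
    unfolding h_def using feasible x_min converges_along_limit_is_hard_thr[OF r] that
    by (intro hobj_le_perturbed) auto
qed

end

theorem corollary3:
  fixes A :: "complex^'p^'m" and y :: "complex^'m"
    and P :: "'j::finite \<Rightarrow> complex^'p^'n"
    and \<nu> \<eta> C :: real
    and Wt :: "nat \<Rightarrow> 'k::{finite,linorder} \<Rightarrow> complex^'n^'n"
    and Bt :: "nat \<Rightarrow> 'j \<Rightarrow> complex^'n"
    and \<Gamma>t :: "nat \<Rightarrow> 'j \<Rightarrow> 'k"
    and xt :: "nat \<Rightarrow> complex^'p"
  assumes P01: "\<forall>j a b. P j $ a $ b = 0 \<or> P j $ a $ b = 1"
    and pos: "\<nu> > 0" "\<eta> > 0" "C > 0"
    and iter: "A2_iterates A y P \<nu> \<eta> C Wt Bt \<Gamma>t xt"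
  defines "h \<equiv> hobj A y P \<nu> \<eta> C"
  shows
    \<comment> \<open>accumulation points exist\<close>
    "(\<exists>W B \<Gamma> x. is_accum_point Wt Bt \<Gamma>t xt W B \<Gamma> x)
    \<comment> \<open>they form an equivalence class: all have the same objective value\<close>
   \<and> (\<exists>hs. \<forall>W B \<Gamma> x. is_accum_point Wt Bt \<Gamma>t xt W B \<Gamma> x \<longrightarrow> h W B \<Gamma> x = hs)
    \<comment> \<open>the iterates converge to this set of accumulation points\<close>
   \<and> (\<forall>\<epsilon>>0. \<exists>T. \<forall>t\<ge>T. \<exists>W B \<Gamma> x. is_accum_point Wt Bt \<Gamma>t xt W B \<Gamma> x
                          \<and> iter_close \<epsilon> (Wt t) (Bt t) (\<Gamma>t t) (xt t) W B \<Gamma> x)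
    \<comment> \<open>every accumulation point is a partial minimizer\<close>
   \<and> (\<forall>W B \<Gamma> x. is_accum_point Wt Bt \<Gamma>t xt W B \<Gamma> x \<longrightarrow>
        (\<forall>x'. h W B \<Gamma> x \<le> h W B \<Gamma> x')
      \<and> (\<forall>W'. h W B \<Gamma> x \<le> h W' B \<Gamma> x)
      \<and> (\<forall>B' \<Gamma>'. h W B \<Gamma> x \<le> h W B' \<Gamma>' x)
      \<and> (\<forall>dB dx. (\<forall>j i. norm (dB j $ i) < \<eta> / 2) \<longrightarrow>
                  h W B \<Gamma> x \<le> h W (\<lambda>j. B j + dB j) \<Gamma> (x + dx)))"
proof -
  interpret A2_run A y P \<nu> \<eta> C Wt Bt \<Gamma>t xt
    using pos iter by unfold_locales simp_all
  have "\<exists>hs. \<forall>W B \<Gamma> x. is_accum_point Wt Bt \<Gamma>t xt W B \<Gamma> x \<longrightarrow> h W B \<Gamma> x = hs"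
    using accum_point_hobj unfolding h_def by blast
  then show ?thesis
    using accum_point_exists iterates_approach_accum_points accum_point_partial_minimizer
    unfolding h_def by blast
qed

end
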